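(* There are no binary self-orthogonal $[125,7,62]$ codes and no binary self-orthogonal $[62,7,30]$ codes.
   Context: A binary linear code $C$ is self-orthogonal if $C\subseteq C^\perp$. *)

theory Defs
  imports "HOL-Analysis.Analysis" "HOL-Library.Z2"
begin

text \<open>Binary words of length n are vectors in bit^'n, where the finite index type 'n
  has CARD('n) = n (e.g. the numeral type 125).\<close>

definition hamming_dist :: "bit^'n \<Rightarrow> bit^'n \<Rightarrow> nat" where
  "hamming_dist x y = card {i. x $ i \<noteq> y $ i}"

definition min_distance :: "(bit^'n) set \<Rightarrow> nat" where
  "min_distance C = Min {hamming_dist x y | x y. x \<in> C \<and> y \<in> C \<and> x \<noteq> y}"

definition binary_linear_code :: "nat \<Rightarrow> nat \<Rightarrow> (bit^'n) set \<Rightarrow> bool" where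
  "binary_linear_code k d C \<longleftrightarrow> vec.subspace C \<and> vec.dim C = k \<and> min_distance C = d"

definition dot2 :: "bit^'n \<Rightarrow> bit^'n \<Rightarrow> bit" where
  "dot2 x y = (\<Sum>i\<in>UNIV. x $ i * y $ i)"

definition dual_code :: "(bit^'n) set \<Rightarrow> (bit^'n) set" where
  "dual_code C = {y. \<forall>x\<in>C. dot2 x y = 0}"

definition self_orthogonal :: "(bit^'n) set \<Rightarrow> bool" where
  "self_orthogonal C \<longleftrightarrow> C \<subseteq> dual_code C"

end

theory Submission
  imports Defs
begin

(* In a self-orthogonal binary code every word has even weight and, since x and y overlap
   in an even number of positions, wt (x + y) = wt x + wt y (mod 4).  Hence the doubly-even
   codewords form a subcode of index at most 2: for k = 7 it has at least 64 words, and its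
   nonzero words have weight at least 4 * ceil (d / 4), i.e. 64 resp. 32.  Plotkin's averaging
   bound 2 (M - 1) w \<le> n M (each coordinate is 1 in at most half of an additively closed set)
   then fails: 2 * 63 * 64 > 125 * 64 and 2 * 63 * 32 > 62 * 64. *)

instance bit :: finite
proof
  have "(UNIV :: bit set) = {0, 1}"
    by (auto intro: bit.exhaust)
  then show "finite (UNIV :: bit set)"
    by (metis finite.emptyI finite.insertI)
qed

lemma inj_on_sum_Pow_independent:
  fixes B :: "('a::field ^ 'n) set"
  assumes "vec.independent B"
  shows "inj_on (sum id) (Pow B)"
proof (rule inj_onI)
  fix S T
  assume S: "S \<in> Pow B" and T: "T \<in> Pow B" and eq: "sum id S = sum id T"
  have "finite B"
    using assms vec.independent_bound_general by blast
  then have "finite S" "finite T"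
    using S T finite_subset by auto
  have indicator_comb: "(\<Sum>x | (of_bool (x \<in> U) :: 'a) \<noteq> 0. of_bool (x \<in> U) *s x) = sum id U"
    for U :: "('a ^ 'n) set"
    by (simp add: Collect_mem_eq)
  have "(\<lambda>x. of_bool (x \<in> S) :: 'a) = (\<lambda>x. of_bool (x \<in> T))"
    using assms
  proof (rule vec.independentD_unique)
    show "(\<Sum>x | (of_bool (x \<in> S) :: 'a) \<noteq> 0. of_bool (x \<in> S) *s x) =
       (\<Sum>x | (of_bool (x \<in> T) :: 'a) \<noteq> 0. of_bool (x \<in> T) *s x)"
      unfolding indicator_comb by (rule eq)
  qed (use S T \<open>finite S\<close> \<open>finite T\<close> in auto)
  then show "S = T"
    by (simp add: fun_eq_iff set_eq_iff of_bool_eq_iff)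
qed

lemma card_subspace_ge:
  fixes C :: "('a::{field, finite} ^ 'n) set"
  assumes "vec.subspace C"
  shows "2 ^ vec.dim C \<le> card C"
proof -
  obtain B where B: "B \<subseteq> C" "vec.independent B" "C \<subseteq> vec.span B" "card B = vec.dim C"
    by (rule vec.basis_exists)
  have "finite B"
    using B(2) vec.independent_bound_general by blast
  have "2 ^ card B = card (Pow B)"
    using \<open>finite B\<close> by (simp add: card_Pow)
  also have "\<dots> = card (sum id ` Pow B)"
    by (rule card_image[symmetric, OF inj_on_sum_Pow_independent[OF B(2)]])
  also have "\<dots> \<le> card C"
  proof (rule card_mono)
    show "sum id ` Pow B \<subseteq> C"
    proof safe
      fix U assume "U \<subseteq> B"
      then show "sum id U \<in> C"
        using B(1) by (intro vec.subspace_sum[OF assms]) auto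
    qed
  qed simp
  finally show ?thesis
    using B(4) by simp
qed

definition weight :: "bit ^ 'n \<Rightarrow> nat" where
  "weight x = card {i. x $ i \<noteq> 0}"

lemma hamming_dist_0_right: "hamming_dist x 0 = weight x"
  by (simp add: hamming_dist_def weight_def)

lemma min_distance_le_weight:
  fixes C :: "(bit ^ 'n) set"
  assumes "c \<in> C" "c \<noteq> 0" "0 \<in> C"
  shows "min_distance C \<le> weight c"
proof -
  have "finite {hamming_dist x y | x y. x \<in> C \<and> y \<in> C}"
    by (rule finite_image_set2) simp_all
  then have "finite {hamming_dist x y | x y. x \<in> C \<and> y \<in> C \<and> x \<noteq> y}"
    by (rule finite_subset[rotated]) blast
  then show ?thesis
    unfolding min_distance_def hamming_dist_0_right[symmetric] using assms by (intro Min_le) auto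
qed

lemma card_eq_sum_indicator: "card {i::'n::finite. P i} = (\<Sum>i\<in>UNIV. if P i then 1 else 0)"
  by (simp add: sum.If_cases)

lemma weight_add:
  "weight (x + y) + 2 * card {i. x $ i = 1 \<and> y $ i = 1} = weight x + weight y"
proof -
  have "(if (x + y) $ i \<noteq> 0 then 1 else 0) + 2 * (if x $ i = 1 \<and> y $ i = 1 then 1 else 0)
      = (if x $ i \<noteq> 0 then 1 else 0) + (if y $ i \<noteq> 0 then 1 else (0::nat))" for i
    by (cases "x $ i"; cases "y $ i") auto
  then show ?thesis
    unfolding weight_def card_eq_sum_indicator sum_distrib_left sum.distrib[symmetric] by simp
qed

lemma of_nat_bit: "(of_nat k :: bit) = (if even k then 0 else 1)"
  by (induction k) auto

lemma dot2_eq_of_nat_card: "dot2 x y = of_nat (card {i. x $ i = 1 \<and> y $ i = 1})"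
proof -
  have "x $ i * y $ i = of_nat (if x $ i = 1 \<and> y $ i = 1 then 1 else 0)" for i
    by (cases "x $ i"; cases "y $ i") auto
  then show ?thesis
    unfolding dot2_def card_eq_sum_indicator of_nat_sum by simp
qed

lemma self_orthogonal_even_overlap:
  assumes "self_orthogonal C" "x \<in> C" "y \<in> C"
  shows "even (card {i. x $ i = 1 \<and> y $ i = 1})"
  using assms dot2_eq_of_nat_card[of x y]
  by (auto simp: self_orthogonal_def dual_code_def of_nat_bit split: if_splits)

lemma self_orthogonal_even_weight:
  assumes "self_orthogonal C" "x \<in> C"
  shows "even (weight x)"
proof -
  have "{i. x $ i = 1 \<and> x $ i = 1} = {i. x $ i \<noteq> 0}"
    by auto
  then show ?thesis
    using self_orthogonal_even_overlap[OF assms assms(2)] by (simp add: weight_def)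
qed

lemma self_orthogonal_weight_add_mod_4:
  assumes "self_orthogonal C" "x \<in> C" "y \<in> C"
  shows "weight (x + y) mod 4 = (weight x + weight y) mod 4"
proof -
  obtain k where "card {i. x $ i = 1 \<and> y $ i = 1} = 2 * k"
    using self_orthogonal_even_overlap[OF assms] by blast
  then have "weight x + weight y = weight (x + y) + 4 * k"
    using weight_add[of x y] by simp
  then show ?thesis
    by simp
qed

lemma mod_4_eq_2_if_even_not_dvd:
  fixes a :: nat
  assumes "even a" "\<not> 4 dvd a"
  shows "a mod 4 = 2"
proof -
  obtain m where m: "a = 2 * m"
    using assms(1) by blast
  then have "odd m"
    using assms(2) by auto
  then obtain q where "m = 2 * q + 1"
    by (rule oddE)
  then show ?thesis
    using m by (simp add: mod_Suc)
qed

definition doubly_even_part :: "(bit ^ 'n) set \<Rightarrow> (bit ^ 'n) set" where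
  "doubly_even_part C = {c \<in> C. 4 dvd weight c}"

lemma doubly_even_part_add:
  assumes "vec.subspace C" "self_orthogonal C" "x \<in> doubly_even_part C" "y \<in> doubly_even_part C"
  shows "x + y \<in> doubly_even_part C"
proof -
  have xy: "x \<in> C" "y \<in> C" "4 dvd weight x" "4 dvd weight y"
    using assms(3,4) by (auto simp: doubly_even_part_def)
  have "weight (x + y) mod 4 = (weight x mod 4 + weight y mod 4) mod 4"
    using self_orthogonal_weight_add_mod_4[OF assms(2) xy(1,2)] by (simp add: mod_add_eq)
  also have "\<dots> = 0"
    using xy(3,4) by simp
  finally show ?thesis
    using vec.subspace_add[OF assms(1) xy(1,2)] by (auto simp: doubly_even_part_def)
qed

lemma add_not_doubly_even:
  assumes "vec.subspace C" "self_orthogonal C"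
    and "x \<in> C - doubly_even_part C" "y \<in> C - doubly_even_part C"
  shows "x + y \<in> doubly_even_part C"
proof -
  have xy: "x \<in> C" "y \<in> C" "\<not> 4 dvd weight x" "\<not> 4 dvd weight y"
    using assms(3,4) by (auto simp: doubly_even_part_def)
  have "weight (x + y) mod 4 = (weight x mod 4 + weight y mod 4) mod 4"
    using self_orthogonal_weight_add_mod_4[OF assms(2) xy(1,2)] by (simp add: mod_add_eq)
  also have "\<dots> = 0"
    using xy mod_4_eq_2_if_even_not_dvd self_orthogonal_even_weight[OF assms(2)] by simp
  finally show ?thesis
    using vec.subspace_add[OF assms(1) xy(1,2)] by (auto simp: doubly_even_part_def)
qed

lemma card_le_card_translate:
  fixes a :: "'a::group_add"
  assumes "finite B" "(\<lambda>x. x + a) ` A \<subseteq> B"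
  shows "card A \<le> card B"
  using assms by (intro card_inj_on_le[of "\<lambda>x. x + a"]) (auto intro: inj_onI)

lemma card_le_twice_doubly_even_part:
  assumes "vec.subspace C" "self_orthogonal C"
  shows "card C \<le> 2 * card (doubly_even_part C)"
proof (cases "C - doubly_even_part C = {}")
  case True
  then have "doubly_even_part C = C"
    by (auto simp: doubly_even_part_def)
  then show ?thesis
    by simp
next
  case False
  then obtain c where c: "c \<in> C - doubly_even_part C"
    by blast
  have "card (C - doubly_even_part C) \<le> card (doubly_even_part C)"
    using add_not_doubly_even[OF assms _ c] by (intro card_le_card_translate[of _ c]) auto
  moreover have "card C = card (doubly_even_part C) + card (C - doubly_even_part C)"
    by (simp add: card_Diff_subset card_mono doubly_even_part_def)
  ultimately show ?thesis
    by simp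
qed

lemma card_coordinate_one_le_half:
  fixes D :: "(bit ^ 'n) set"
  assumes closed: "\<And>x y. x \<in> D \<Longrightarrow> y \<in> D \<Longrightarrow> x + y \<in> D"
  shows "2 * card {c \<in> D. c $ i = 1} \<le> card D"
proof (cases "{c \<in> D. c $ i = 1} = {}")
  case False
  then obtain a where a: "a \<in> D" "a $ i = 1"
    by blast
  have split: "card D = card {c \<in> D. c $ i = 1} + card {c \<in> D. c $ i = 0}"
    by (subst card_Un_disjoint[symmetric]) (auto intro: arg_cong[where f = card] elim: bit.exhaust)
  have "card {c \<in> D. c $ i = 1} \<le> card {c \<in> D. c $ i = 0}"
    using closed a by (intro card_le_card_translate[of _ a]) auto
  then show ?thesis
    using split by simp
qed (metis card.empty mult_0_right zero_le)

lemma sum_weight_le: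
  fixes D :: "(bit ^ 'n) set"
  assumes "\<And>x y. x \<in> D \<Longrightarrow> y \<in> D \<Longrightarrow> x + y \<in> D"
  shows "2 * (\<Sum>c\<in>D. weight c) \<le> CARD('n) * card D"
proof -
  have "(\<Sum>c\<in>D. weight c) = (\<Sum>c\<in>D. \<Sum>i\<in>UNIV. if c $ i = 1 then 1 else 0)"
    unfolding weight_def card_eq_sum_indicator by simp
  also have "\<dots> = (\<Sum>i\<in>UNIV. card {c \<in> D. c $ i = 1})"
    by (subst sum.swap) (simp add: sum.If_cases Int_def)
  finally have "2 * (\<Sum>c\<in>D. weight c) = (\<Sum>i\<in>UNIV. 2 * card {c \<in> D. c $ i = 1})"
    by (simp add: sum_distrib_left)
  also have "\<dots> \<le> (\<Sum>i\<in>(UNIV :: 'n set). card D)"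
    using card_coordinate_one_le_half[OF assms] by (intro sum_mono)
  finally show ?thesis
    by simp
qed

lemma plotkin_bound:
  fixes D :: "(bit ^ 'n) set"
  assumes "\<And>x y. x \<in> D \<Longrightarrow> y \<in> D \<Longrightarrow> x + y \<in> D" "0 \<in> D"
    and "\<And>c. c \<in> D \<Longrightarrow> c \<noteq> 0 \<Longrightarrow> w \<le> weight c"
  shows "(card D - 1) * (2 * w) \<le> card D * CARD('n)"
proof -
  have "(card D - 1) * w = (\<Sum>c\<in>D - {0}. w)"
    using assms(2) by simp
  also have "\<dots> \<le> (\<Sum>c\<in>D - {0}. weight c)"
    using assms(3) by (intro sum_mono) auto
  also have "\<dots> \<le> (\<Sum>c\<in>D. weight c)"
    by (intro sum_mono2) auto
  finally show ?thesis
    using sum_weight_le[OF assms(1)] by (simp add: mult_ac)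
qed

lemma pred_ratio_mono:
  fixes M N a b :: nat
  assumes "M \<le> N" "(N - 1) * a \<le> N * b" "0 < M"
  shows "(M - 1) * a \<le> M * b"
proof -
  have "(M - 1) * N \<le> (N - 1) * M"
    using assms(1) by (simp add: algebra_simps diff_mult_distrib)
  then have "N * ((M - 1) * a) \<le> M * ((N - 1) * a)"
    by (metis mult.assoc mult.commute mult_le_mono1)
  also have "\<dots> \<le> N * (M * b)"
    using assms(2) by (simp add: mult.left_commute)
  finally show ?thesis
    using assms by simp
qed

lemma self_orthogonal_code_bound:
  fixes C :: "(bit ^ 'n) set"
  assumes code: "binary_linear_code k d C" and so: "self_orthogonal C"
  shows "(2 ^ (k - 1) - 1) * (2 * (4 * ((d + 3) div 4))) \<le> 2 ^ (k - 1) * CARD('n)"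
proof -
  let ?D = "doubly_even_part C"
  have sub: "vec.subspace C" and dim: "vec.dim C = k" and dist: "min_distance C = d"
    using code by (auto simp: binary_linear_code_def)
  have "0 \<in> ?D"
    using vec.subspace_0[OF sub] by (simp add: doubly_even_part_def weight_def)
  have "2 ^ (k - 1) \<le> card ?D"
  proof (cases k)
    case 0
    have "?D \<noteq> {}"
      using \<open>0 \<in> ?D\<close> by blast
    then show ?thesis
      using 0 by (simp add: Suc_le_eq card_gt_0_iff)
  next
    case (Suc j)
    then show ?thesis
      using card_subspace_ge[OF sub] card_le_twice_doubly_even_part[OF sub so] dim by simp
  qed
  moreover have "4 * ((d + 3) div 4) \<le> weight c" if "c \<in> ?D" "c \<noteq> 0" for c
  proof -
    have "4 dvd weight c"
      using that(1) by (simp add: doubly_even_part_def)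
    then obtain r where r: "weight c = 4 * r"
      by (rule dvdE)
    have "d \<le> weight c"
      using that min_distance_le_weight[of c C] vec.subspace_0[OF sub] dist
      by (auto simp: doubly_even_part_def)
    then have "(d + 3) div 4 < Suc r"
      using r by (simp add: div_less_iff_less_mult)
    then show ?thesis
      using r by simp
  qed
  then have "(card ?D - 1) * (2 * (4 * ((d + 3) div 4))) \<le> card ?D * CARD('n)"
    using doubly_even_part_add[OF sub so] \<open>0 \<in> ?D\<close> by (intro plotkin_bound) auto
  ultimately show ?thesis
    by (rule pred_ratio_mono) simp
qed

theorem proposition6p2:
  shows "\<not> (\<exists>C :: (bit^125) set. binary_linear_code 7 62 C \<and> self_orthogonal C)
       \<and> \<not> (\<exists>C :: (bit^62) set. binary_linear_code 7 30 C \<and> self_orthogonal C)"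
proof (intro conjI notI; elim exE conjE)
  fix C :: "(bit^125) set"
  assume "binary_linear_code 7 62 C" "self_orthogonal C"
  from self_orthogonal_code_bound[OF this] show False
    by simp
next
  fix C :: "(bit^62) set"
  assume "binary_linear_code 7 30 C" "self_orthogonal C"
  from self_orthogonal_code_bound[OF this] show False
    by simp
qed

end
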